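(* In the algorithm GBGC, equip $G$ with the relation: $(\mathbf u',f')<(\mathbf u,f)$ iff, with $L=\mathrm{lcm}(\mathrm{lpp}(\mathbf u),\mathrm{lpp}(\mathbf u'))$, $t'=L/\mathrm{lpp}(\mathbf u')$, $t=L/\mathrm{lpp}(\mathbf u)$, either $\mathrm{lpp}(t'f')\prec\mathrm{lpp}(tf)$, or $\mathrm{lpp}(t'f')=\mathrm{lpp}(tf)$ and $(\mathbf u',f')$ was added to $G$ later than $(\mathbf u,f)$. Then: (i) whenever a selected critical pair $[t_f(\mathbf u,f),t_g(\mathbf v,g)]$ is regular and not gen-rewritable by $G$ and its S-polynomial reduces to $(\mathbf w,h)$, one has $(\mathbf w,h)<(\mathbf u,f)$ (admissibility); (ii) if $(\mathbf u,f)\in G$, $f\ne 0$, $t$ a power product, and $t(\mathbf u,f)$ is reducible by $G$ and reduces to $(\mathbf w,h)$ for which there is $(\mathbf u',f')\in G$ with $\mathrm{lpp}(\mathbf u')\mid\mathrm{lpp}(\mathbf w)$, $\mathrm{lpp}(f')\mid\mathrm{lpp}(h)$, $\mathrm{lpp}(\mathbf w)/\mathrm{lpp}(\mathbf u')=\mathrm{lpp}(h)/\mathrm{lpp}(f')$ and $\mathrm{lc}(\mathbf w)/\mathrm{lc}(\mathbf u')=\mathrm{lc}(h)/\mathrm{lc}(f')$ (eventually super top-reducible), then $t(\mathbf u,f)$ is gen-rewritable by $G$ with respect to this relation.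
   Context: Setting: $R=K[x_1,\dots,x_n]$, $f_1,\dots,f_m\in R$, $\mathbf M=\{(\mathbf u,f)\in R^m\times R:\mathbf u\cdot(f_1,\dots,f_m)=f\}$, $\mathbf e_i$ unit vectors, arbitrary term orders $\prec$ on $R$ and on $R^m$, $\mathrm{lpp}$/$\mathrm{lc}$ leading power product (term)/coefficient, $\mathrm{lpp}(0)=0$ below all nonzero terms. Critical pair $[t_f(\mathbf u,f),t_g(\mathbf v,g)]$ of $(\mathbf u,f),(\mathbf v,g)$ ($f,g\ne0$): $t_f=\mathrm{lcm}(\mathrm{lpp}(f),\mathrm{lpp}(g))/\mathrm{lpp}(f)$, $t_g$ likewise, with $\mathrm{lpp}(t_f\mathbf u)\succeq\mathrm{lpp}(t_g\mathbf v)$; S-polynomial $t_f(\mathbf u,f)-c\,t_g(\mathbf v,g)$, $c=\mathrm{lc}(f)/\mathrm{lc}(g)$; regular if $\mathrm{lpp}(t_f\mathbf u)\succ\mathrm{lpp}(t_g\mathbf v)$. Gen-rewritable: $t(\mathbf u,f)$ ($(\mathbf u,f)\in B$, $f\ne0$) is gen-rewritable by $B$ if some $(\mathbf u',f')\in B$ has $\mathrm{lpp}(\mathbf u')\mid\mathrm{lpp}(t\mathbf u)$ and $(\mathbf u',f')<(\mathbf u,f)$; a critical pair is gen-rewritable if either component is. Reducibility/reduction of $(\mathbf u,f)$ by $B$: a one-step reduction replaces it by $(\mathbf u-ct\mathbf v,f-ctg)$ for some $(\mathbf v,g)\in B$, $g\ne0$, $\mathrm{lpp}(g)\mid\mathrm{lpp}(f)$,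 $c=\mathrm{lc}(f)/\mathrm{lc}(g)$, $t=\mathrm{lpp}(f)/\mathrm{lpp}(g)$, provided $\mathrm{lpp}(\mathbf u-ct\mathbf v)=\mathrm{lpp}(\mathbf u)$; reducing means repeating until no step applies. Algorithm GBGC: start with $G=\{(\mathbf e_i,f_i)\}$, CPairs = all critical pairs of these, then add $(f_j\mathbf e_i-f_i\mathbf e_j,0)$ ($i<j$) to $G$; while CPairs nonempty, remove any pair; if it is regular and not gen-rewritable by $G$, reduce its S-polynomial by $G$ to $(\mathbf w,h)$; if $h\ne0$, add critical pairs of $(\mathbf w,h)$ with all $(\mathbf w',h')\in G$, $h'\ne0$, to CPairs and add $(h\mathbf e_i-f_i\mathbf w,0)$, $i=1..m$, to $G$; add $(\mathbf w,h)$ to $G$. *)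

theory Defs
  imports Main "HOL-Library.Poly_Mapping"
begin

(* Power products in the variables of type 'x (a finite type = x_1..x_n),
   polynomials in R = K[x_1..x_n], vectors in R^m (components 0..m-1),
   module terms t e_i = (t,i). *)
type_synonym 'x pp = "'x \<Rightarrow>\<^sub>0 nat"
type_synonym ('x,'a) poly = "'x pp \<Rightarrow>\<^sub>0 'a"
type_synonym ('x,'a) vec = "nat \<Rightarrow> ('x,'a) poly"
type_synonym 'x mterm = "'x pp \<times> nat"
type_synonym ('x,'a) labpoly = "('x,'a) vec \<times> ('x,'a) poly"

definition strict_linear :: "('t \<Rightarrow> 't \<Rightarrow> bool) \<Rightarrow> bool" where
  "strict_linear ord \<longleftrightarrow> (\<forall>s. \<not> ord s s) \<and> (\<forall>s t u. ord s t \<longrightarrow> ord t u \<longrightarrow> ord s u)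
     \<and> (\<forall>s t. s \<noteq> t \<longrightarrow> ord s t \<or> ord t s)"

definition pp_term_order :: "('x pp \<Rightarrow> 'x pp \<Rightarrow> bool) \<Rightarrow> bool" where
  "pp_term_order ord \<longleftrightarrow> strict_linear ord \<and> wf {(s,t). ord s t}
     \<and> (\<forall>t. t \<noteq> 0 \<longrightarrow> ord 0 t) \<and> (\<forall>s t r. ord s t \<longrightarrow> ord (s + r) (t + r))"

definition mod_term_order :: "('x mterm \<Rightarrow> 'x mterm \<Rightarrow> bool) \<Rightarrow> bool" where
  "mod_term_order ord \<longleftrightarrow> strict_linear ord \<and> wf {(s,t). ord s t}
     \<and> (\<forall>t i r. r \<noteq> 0 \<longrightarrow> ord (t, i) (t + r, i))
     \<and> (\<forall>s i t j r. ord (s, i) (t, j) \<longrightarrow> ord (s + r, i) (t + r, j))"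

(* leading term of a finite set of terms; None plays the role of lpp(0) = 0 *)
definition lterm :: "('t \<Rightarrow> 't \<Rightarrow> bool) \<Rightarrow> 't set \<Rightarrow> 't option" where
  "lterm ord S = (if S = {} then None else Some (THE t. t \<in> S \<and> (\<forall>s\<in>S. s \<noteq> t \<longrightarrow> ord s t)))"

definition opt_less :: "('t \<Rightarrow> 't \<Rightarrow> bool) \<Rightarrow> 't option \<Rightarrow> 't option \<Rightarrow> bool" where
  "opt_less ord a b = (case b of None \<Rightarrow> False
      | Some y \<Rightarrow> (case a of None \<Rightarrow> True | Some x \<Rightarrow> ord x y))"

definition lppR :: "('x pp \<Rightarrow> 'x pp \<Rightarrow> bool) \<Rightarrow> ('x,'a::zero) poly \<Rightarrow> 'x pp option" where
  "lppR ord f = lterm ord (Poly_Mapping.keys f)"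

definition lcR :: "('x pp \<Rightarrow> 'x pp \<Rightarrow> bool) \<Rightarrow> ('x,'a::zero) poly \<Rightarrow> 'a" where
  "lcR ord f = (case lppR ord f of None \<Rightarrow> 0 | Some t \<Rightarrow> Poly_Mapping.lookup f t)"

definition vkeys :: "('x,'a::zero) vec \<Rightarrow> 'x mterm set" where
  "vkeys u = {(t, i). t \<in> Poly_Mapping.keys (u i)}"

definition lppM :: "('x mterm \<Rightarrow> 'x mterm \<Rightarrow> bool) \<Rightarrow> ('x,'a::zero) vec \<Rightarrow> 'x mterm option" where
  "lppM ord u = lterm ord (vkeys u)"

definition lcM :: "('x mterm \<Rightarrow> 'x mterm \<Rightarrow> bool) \<Rightarrow> ('x,'a::zero) vec \<Rightarrow> 'a" where
  "lcM ord u = (case lppM ord u of None \<Rightarrow> 0 | Some (t, i) \<Rightarrow> Poly_Mapping.lookup (u i) t)"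

definition pp_dvd :: "'x pp \<Rightarrow> 'x pp \<Rightarrow> bool" where
  "pp_dvd s t \<longleftrightarrow> (\<exists>r. t = s + r)"

definition pp_lcm :: "'x pp \<Rightarrow> 'x pp \<Rightarrow> 'x pp" where
  "pp_lcm s t = s + (t - s)"   (* pointwise maximum of exponents *)

(* divisibility of leading terms of vectors (ring convention: everything divides 0) *)
definition mdvd :: "'x mterm option \<Rightarrow> 'x mterm option \<Rightarrow> bool" where
  "mdvd a b = (case b of None \<Rightarrow> True
      | Some (t, j) \<Rightarrow> (case a of None \<Rightarrow> False | Some (s, i) \<Rightarrow> i = j \<and> pp_dvd s t))"

definition mono :: "'x pp \<Rightarrow> ('x,'a::{zero,one}) poly" where
  "mono t = Poly_Mapping.single t 1"

definition vsmul :: "('x,'a::semiring_0) poly \<Rightarrow> ('x,'a) vec \<Rightarrow> ('x,'a) vec" where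
  "vsmul p u = (\<lambda>i. p * u i)"

definition unitv :: "nat \<Rightarrow> ('x,'a::{zero_neq_one}) vec" where
  "unitv i = (\<lambda>j. if j = i then 1 else 0)"

definition lmul :: "'x pp \<Rightarrow> ('x,'a::semiring_1) labpoly \<Rightarrow> ('x,'a) labpoly" where
  "lmul t p = (vsmul (mono t) (fst p), mono t * snd p)"

context
  fixes ordR :: "'x pp \<Rightarrow> 'x pp \<Rightarrow> bool"
    and ordM :: "'x mterm \<Rightarrow> 'x mterm \<Rightarrow> bool"
begin

(* the relation < on G (elements identified by their position in the list G,
   i.e. by the time they were added) *)
definition gless :: "('x,'a::field) labpoly list \<Rightarrow> nat \<Rightarrow> nat \<Rightarrow> bool" where
  "gless G k' k \<longleftrightarrow>
     (case (lppM ordM (fst (G ! k')), lppM ordM (fst (G ! k))) of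
        (Some (s', _), Some (s, _)) \<Rightarrow>
          (let L = pp_lcm s s'; t' = L - s'; t = L - s;
               a = lppR ordR (mono t' * snd (G ! k')); b = lppR ordR (mono t * snd (G ! k))
           in opt_less ordR a b \<or> (a = b \<and> k < k'))
      | _ \<Rightarrow> False)"

definition genrew :: "('x,'a::field) labpoly list \<Rightarrow> 'x pp \<Rightarrow> nat \<Rightarrow> bool" where
  "genrew G t k \<longleftrightarrow> (\<exists>k' < length G.
      mdvd (lppM ordM (fst (G ! k'))) (lppM ordM (fst (lmul t (G ! k)))) \<and> gless G k' k)"

definition red1 :: "('x,'a::field) labpoly list \<Rightarrow> ('x,'a) labpoly \<Rightarrow> ('x,'a) labpoly \<Rightarrow> bool" where
  "red1 G p q \<longleftrightarrow> (\<exists>v g t. (v, g) \<in> set G \<and> g \<noteq> 0 \<and> snd p \<noteq> 0 \<and>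
      the (lppR ordR (snd p)) = the (lppR ordR g) + t \<and>
      (let c = lcR ordR (snd p) / lcR ordR g in
        q = (fst p - vsmul (Poly_Mapping.single t c) v, snd p - Poly_Mapping.single t c * g) \<and>
        lppM ordM (fst q) = lppM ordM (fst p)))"

definition reducible :: "('x,'a::field) labpoly list \<Rightarrow> ('x,'a) labpoly \<Rightarrow> bool" where
  "reducible G p \<longleftrightarrow> (\<exists>q. red1 G p q)"

definition reduces :: "('x,'a::field) labpoly list \<Rightarrow> ('x,'a) labpoly \<Rightarrow> ('x,'a) labpoly \<Rightarrow> bool" where
  "reduces G p q \<longleftrightarrow> (red1 G)\<^sup>*\<^sup>* p q \<and> \<not> reducible G q"

definition tmul :: "('x,'a::field) labpoly list \<Rightarrow> nat \<Rightarrow> nat \<Rightarrow> 'x pp" where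
  "tmul G k l = (let a = the (lppR ordR (snd (G ! k))); b = the (lppR ordR (snd (G ! l)))
                 in pp_lcm a b - a)"

definition regular_cp :: "('x,'a::field) labpoly list \<Rightarrow> nat \<Rightarrow> nat \<Rightarrow> bool" where
  "regular_cp G k l \<longleftrightarrow> snd (G ! k) \<noteq> 0 \<and> snd (G ! l) \<noteq> 0 \<and>
     opt_less ordM (lppM ordM (fst (lmul (tmul G l k) (G ! l))))
                   (lppM ordM (fst (lmul (tmul G k l) (G ! k))))"

definition cp_genrew :: "('x,'a::field) labpoly list \<Rightarrow> nat \<Rightarrow> nat \<Rightarrow> bool" where
  "cp_genrew G k l \<longleftrightarrow> genrew G (tmul G k l) k \<or> genrew G (tmul G l k) l"

definition spoly :: "('x,'a::field) labpoly list \<Rightarrow> nat \<Rightarrow> nat \<Rightarrow> ('x,'a) labpoly" where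
  "spoly G k l = (let c = lcR ordR (snd (G ! k)) / lcR ordR (snd (G ! l));
                      p = lmul (tmul G k l) (G ! k); q = lmul (tmul G l k) (G ! l)
                  in (fst p - vsmul (Poly_Mapping.single 0 c) (fst q),
                      snd p - Poly_Mapping.single 0 c * snd q))"

definition new_syz :: "(nat \<Rightarrow> ('x,'a::field) poly) \<Rightarrow> nat \<Rightarrow> ('x,'a) labpoly \<Rightarrow> ('x,'a) labpoly list" where
  "new_syz F m wh = map (\<lambda>i. (vsmul (snd wh) (unitv i) - vsmul (F i) (fst wh), 0)) [0..<m]"

definition G_after :: "(nat \<Rightarrow> ('x,'a::field) poly) \<Rightarrow> nat \<Rightarrow> ('x,'a) labpoly list \<Rightarrow> ('x,'a) labpoly
      \<Rightarrow> ('x,'a) labpoly list" where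
  "G_after F m G wh = G @ (if snd wh \<noteq> 0 then new_syz F m wh else []) @ [wh]"

(* states: (G, CPairs); critical pairs stored as pairs of positions in G (unoriented) *)
definition gbgc_init :: "(nat \<Rightarrow> ('x,'a::field) poly) \<Rightarrow> nat \<Rightarrow> (nat \<times> nat) list
      \<Rightarrow> ('x,'a) labpoly list \<times> (nat \<times> nat) set" where
  "gbgc_init F m ps =
     (map (\<lambda>i. (unitv i, F i)) [0..<m] @
      map (\<lambda>(i, j). (vsmul (F j) (unitv i) - vsmul (F i) (unitv j), 0)) ps,
      {(i, j). i < j \<and> j < m \<and> F i \<noteq> 0 \<and> F j \<noteq> 0})"

definition gbgc_step :: "(nat \<Rightarrow> ('x,'a::field) poly) \<Rightarrow> nat
      \<Rightarrow> ('x,'a) labpoly list \<times> (nat \<times> nat) set \<Rightarrow> ('x,'a) labpoly list \<times> (nat \<times> nat) set \<Rightarrow> bool" where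
  "gbgc_step F m st st' \<longleftrightarrow> (case st of (G, CP) \<Rightarrow> \<exists>p\<in>CP.
     (if \<exists>(k, l)\<in>{p, prod.swap p}. regular_cp G k l \<and> \<not> cp_genrew G k l
      then (\<exists>k l wh. (k, l) \<in> {p, prod.swap p} \<and> regular_cp G k l \<and> \<not> cp_genrew G k l \<and>
              reduces G (spoly G k l) wh \<and>
              st' = (G_after F m G wh,
                     if snd wh \<noteq> 0
                     then (CP - {p}) \<union> {(length G + m, j) | j. j < length G \<and> snd (G ! j) \<noteq> 0}
                     else CP - {p}))
      else st' = (G, CP - {p})))"

end

end

theory Submission
  imports Defs
begin

(* Both claims are statements about a single step of GBGC and reduce to facts about
   leading terms.
   (i) For a regular critical pair [t_f (u,f), t_g (v,g)] the S-polynomial has the signature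
   lpp(t_f u) of its first component, while the leading monomials of t_f f and c t_g g cancel,
   so its polynomial part lies strictly below lpp(t_f f).  Reduction by G keeps the signature
   and never raises the leading term of the polynomial part.  Hence the new element (w,h)
   has signature t_f lpp(u); the lcm of the two signatures is lpp(w) itself, the cofactors
   are 1 and t_f, and lpp(h) < lpp(t_f f) says exactly that (w,h) < (u,f).
   (ii) If t(u,f) is reducible, its reduct (w,h) satisfies lpp(h) < lpp(t f) and
   lpp(w) = t lpp(u).  If lpp(w) = s lpp(u') and lpp(h) = s lpp(f') for some (u',f') in G,
   then lpp(u') divides lpp(t u), and cancelling the factor that s and t share beyond the
   lcm of the two signatures turns lpp(h) < lpp(t f) into (u',f') < (u,f).  The condition on
   leading coefficients is not needed.
   Leading terms of vectors exist only for finitely supported vectors, so we also show that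
   every reachable state of GBGC has finitely supported labels and stores only critical
   pairs of elements of G. *)

lemma strict_linear_irrefl: "strict_linear ord \<Longrightarrow> \<not> ord s s"
  unfolding strict_linear_def by blast

lemma strict_linear_trans: "strict_linear ord \<Longrightarrow> ord s t \<Longrightarrow> ord t u \<Longrightarrow> ord s u"
  unfolding strict_linear_def by blast

lemma strict_linear_total: "strict_linear ord \<Longrightarrow> s \<noteq> t \<Longrightarrow> ord s t \<or> ord t s"
  unfolding strict_linear_def by blast

lemma strict_linear_asym: "strict_linear ord \<Longrightarrow> ord s t \<Longrightarrow> \<not> ord t s"
  unfolding strict_linear_def by blast

lemma lterm_eqI:
  assumes "strict_linear ord" "x \<in> S" "\<forall>y\<in>S. y \<noteq> x \<longrightarrow> ord y x"
  shows "lterm ord S = Some x"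
proof -
  have "(THE t. t \<in> S \<and> (\<forall>s\<in>S. s \<noteq> t \<longrightarrow> ord s t)) = x"
  proof (rule the_equality)
    fix t assume "t \<in> S \<and> (\<forall>s\<in>S. s \<noteq> t \<longrightarrow> ord s t)"
    then show "t = x" using assms strict_linear_asym[OF assms(1), of t x] by fastforce
  qed (use assms in blast)
  then show ?thesis using assms(2) unfolding lterm_def by auto
qed

lemma finite_has_greatest:
  assumes "strict_linear ord" "finite S" "S \<noteq> {}"
  shows "\<exists>x\<in>S. \<forall>y\<in>S. y \<noteq> x \<longrightarrow> ord y x"
  using assms(2,3)
proof (induction S rule: finite_ne_induct)
  case (insert a S)
  then obtain x where x: "x \<in> S" "\<forall>y\<in>S. y \<noteq> x \<longrightarrow> ord y x" by blast
  consider "ord a x" | "a = x" | "ord x a" using strict_linear_total[OF assms(1), of a x] by blast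
  then show ?case
  proof cases
    case 3
    then have "\<forall>y\<in>insert a S. y \<noteq> a \<longrightarrow> ord y a"
      using x strict_linear_trans[OF assms(1)] by auto
    then show ?thesis by blast
  qed (use x in auto)
qed simp

lemma lterm_SomeD:
  assumes "strict_linear ord" "finite S" "lterm ord S = Some x"
  shows "x \<in> S" "\<forall>y\<in>S. y \<noteq> x \<longrightarrow> ord y x"
proof -
  have "S \<noteq> {}" using assms(3) unfolding lterm_def by auto
  then obtain z where "z \<in> S" "\<forall>y\<in>S. y \<noteq> z \<longrightarrow> ord y z"
    using finite_has_greatest[OF assms(1,2)] by blast
  moreover from this have "x = z" using lterm_eqI[OF assms(1)] assms(3) by simp
  ultimately show "x \<in> S" "\<forall>y\<in>S. y \<noteq> x \<longrightarrow> ord y x" by simp_all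
qed

lemma lterm_eq_None: "lterm ord S = None \<longleftrightarrow> S = {}"
  unfolding lterm_def by auto

lemma lterm_empty [simp]: "lterm ord {} = None"
  unfolding lterm_def by simp

lemma lterm_image:
  assumes "strict_linear ord" "finite S"
    and mono: "\<And>x y. x \<in> S \<Longrightarrow> y \<in> S \<Longrightarrow> ord x y \<Longrightarrow> ord (h x) (h y)"
  shows "lterm ord (h ` S) = map_option h (lterm ord S)"
proof (cases "lterm ord S")
  case (Some x)
  note max = lterm_SomeD[OF assms(1,2) Some]
  have "lterm ord (h ` S) = Some (h x)"
    using max mono by (intro lterm_eqI[OF assms(1)]) auto
  then show ?thesis using Some by simp
qed (auto simp: lterm_eq_None)

lemma lterm_below:
  assumes "strict_linear ord" "finite S"
  shows "opt_less ord (lterm ord S) (Some x) \<longleftrightarrow> (\<forall>y\<in>S. ord y x)"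
proof (cases "lterm ord S")
  case (Some z)
  note max = lterm_SomeD[OF assms Some]
  show ?thesis
    using Some max strict_linear_trans[OF assms(1)] unfolding opt_less_def by auto
qed (simp add: opt_less_def lterm_eq_None)

lemma opt_less_trans:
  "strict_linear ord \<Longrightarrow> opt_less ord a b \<Longrightarrow> opt_less ord b c \<Longrightarrow> opt_less ord a c"
  unfolding opt_less_def by (auto split: option.splits intro: strict_linear_trans)

lemma pp_order_strict_linear: "pp_term_order ord \<Longrightarrow> strict_linear ord"
  unfolding pp_term_order_def by blast

lemma pp_order_add_left: "pp_term_order ord \<Longrightarrow> ord a b \<Longrightarrow> ord (t + a) (t + b)"
  unfolding pp_term_order_def by (metis add.commute)

lemma pp_order_cancel:
  assumes "pp_term_order ord" "ord (a + r) (b + r)" shows "ord a b"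
proof -
  have sl: "strict_linear ord" by (rule pp_order_strict_linear[OF assms(1)])
  have "\<not> ord (b + r) (a + r)" by (rule strict_linear_asym[OF sl assms(2)])
  then have "\<not> ord b a" and "a \<noteq> b"
    using assms strict_linear_irrefl[OF sl] unfolding pp_term_order_def by auto
  then show ?thesis using strict_linear_total[OF sl] by blast
qed

lemma mod_order_strict_linear: "mod_term_order ord \<Longrightarrow> strict_linear ord"
  unfolding mod_term_order_def by blast

lemma mod_order_add_left:
  "mod_term_order ord \<Longrightarrow> ord (s, i) (s', j) \<Longrightarrow> ord (t + s, i) (t + s', j)"
  unfolding mod_term_order_def by (metis add.commute)

lemma pp_lcm_cofactors: "(pp_lcm a b - a) + a = (pp_lcm b a - b) + (b :: 'x pp)"
  by (rule poly_mapping_eqI) (simp add: pp_lcm_def lookup_add lookup_minus)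

lemma pp_lcm_multiple:
  fixes s t :: "'x pp"
  shows "pp_lcm s (t + s) - (t + s) = 0" and "pp_lcm s (t + s) - s = t"
  by (rule poly_mapping_eqI, simp add: pp_lcm_def lookup_add lookup_minus)+

lemma pp_common_multiple_decomp:
  fixes t s s' r :: "'x pp"
  assumes "t + s = s' + r"
  shows "t = (pp_lcm s s' - s) + (t + s - pp_lcm s s')"
    and "r = (pp_lcm s s' - s') + (t + s - pp_lcm s s')"
proof -
  have e: "Poly_Mapping.lookup t x + Poly_Mapping.lookup s x = Poly_Mapping.lookup s' x + Poly_Mapping.lookup r x" for x
    using arg_cong[OF assms, of "\<lambda>p. Poly_Mapping.lookup p x"] by (simp add: lookup_add)
  show "t = (pp_lcm s s' - s) + (t + s - pp_lcm s s')"
  proof (rule poly_mapping_eqI)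
    fix x show "Poly_Mapping.lookup t x
        = Poly_Mapping.lookup ((pp_lcm s s' - s) + (t + s - pp_lcm s s')) x"
      using e[of x] by (simp add: pp_lcm_def lookup_add lookup_minus)
  qed
  show "r = (pp_lcm s s' - s') + (t + s - pp_lcm s s')"
  proof (rule poly_mapping_eqI)
    fix x show "Poly_Mapping.lookup r x
        = Poly_Mapping.lookup ((pp_lcm s s' - s') + (t + s - pp_lcm s s')) x"
      using e[of x] by (simp add: pp_lcm_def lookup_add lookup_minus)
  qed
qed

lemma lookup_single_mult:
  fixes g :: "('x,'a::semiring_0) poly"
  shows "Poly_Mapping.lookup (Poly_Mapping.single t c * g) (t + x) = c * Poly_Mapping.lookup g x"
proof -
  have "Poly_Mapping.lookup (Poly_Mapping.single t c * g) (t + x)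
      = c * (\<Sum>q. Poly_Mapping.lookup g q when t + x = t + q)"
    by (simp add: lookup_mult lookup_single when_mult mult_when)
  also have "(\<Sum>q. Poly_Mapping.lookup g q when t + x = t + q) = Poly_Mapping.lookup g x"
    by simp
  finally show ?thesis .
qed

lemma keys_single_mult:
  fixes g :: "('x,'a::semiring_0) poly"
  shows "Poly_Mapping.keys (Poly_Mapping.single t c * g) \<subseteq> (+) t ` Poly_Mapping.keys g"
proof
  fix z assume "z \<in> Poly_Mapping.keys (Poly_Mapping.single t c * g)"
  then obtain a b where "z = a + b" "a \<in> Poly_Mapping.keys (Poly_Mapping.single t c)"
    "b \<in> Poly_Mapping.keys g"
    using keys_mult[of "Poly_Mapping.single t c" g] by blast
  then show "z \<in> (+) t ` Poly_Mapping.keys g" by (simp split: if_splits)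
qed

lemma keys_mono_mult:
  fixes g :: "('x,'a::semiring_1) poly"
  shows "Poly_Mapping.keys (mono t * g) = (+) t ` Poly_Mapping.keys g"
  using keys_single_mult[of t 1 g] lookup_single_mult[of t 1 g]
  by (auto simp: mono_def in_keys_iff)

lemma lppR_eq_None: "lppR ord f = None \<longleftrightarrow> f = 0"
  unfolding lppR_def lterm_eq_None by simp

lemma lppR_SomeD:
  assumes "pp_term_order ord" "lppR ord f = Some a"
  shows "a \<in> Poly_Mapping.keys f" "\<forall>y\<in>Poly_Mapping.keys f. y \<noteq> a \<longrightarrow> ord y a"
  using lterm_SomeD[OF pp_order_strict_linear[OF assms(1)] finite_keys] assms(2)
  unfolding lppR_def by blast+

lemma lcR_eq: "lppR ord f = Some a \<Longrightarrow> lcR ord f = Poly_Mapping.lookup f a"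
  unfolding lcR_def by simp

lemma lppR_mono_mult:
  fixes f :: "('x,'a::semiring_1) poly"
  assumes "pp_term_order ord" "lppR ord f = Some a"
  shows "lppR ord (mono t * f) = Some (t + a)"
proof -
  have "lterm ord ((+) t ` Poly_Mapping.keys f) = map_option ((+) t) (lterm ord (Poly_Mapping.keys f))"
    by (rule lterm_image[OF pp_order_strict_linear[OF assms(1)] finite_keys])
      (rule pp_order_add_left[OF assms(1)])
  then show ?thesis using assms(2) unfolding lppR_def keys_mono_mult by simp
qed

(* Cancelling the leading monomial of p by a monomial multiple of g lowers the leading term;
   this is the common core of S-polynomials and one-step reductions. *)
lemma lppR_cancel:
  fixes p g :: "('x,'a::ring) poly"
  assumes ord: "pp_term_order ord"
    and p: "lppR ord p = Some x" and g: "lppR ord g = Some y"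
    and x: "x = t + y" and c: "Poly_Mapping.lookup p x = c * Poly_Mapping.lookup g y"
  shows "opt_less ord (lppR ord (p - Poly_Mapping.single t c * g)) (Some x)"
proof -
  have "ord z x" if z: "z \<in> Poly_Mapping.keys (p - Poly_Mapping.single t c * g)" for z
  proof -
    have "Poly_Mapping.lookup (p - Poly_Mapping.single t c * g) x = 0"
      using c by (simp add: x lookup_minus lookup_single_mult)
    then have "z \<noteq> x" using z by (auto simp: in_keys_iff)
    moreover have "z \<in> Poly_Mapping.keys p \<or> z \<in> (+) t ` Poly_Mapping.keys g"
      using z keys_diff[of p] keys_single_mult[of t c g] by blast
    ultimately show ?thesis
      using lppR_SomeD[OF ord p] lppR_SomeD[OF ord g] pp_order_add_left[OF ord] x by auto
  qed
  then show ?thesis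
    unfolding lppR_def using lterm_below[OF pp_order_strict_linear[OF ord] finite_keys] by blast
qed

(* Vectors in R^m are functions on indices; leading terms of vectors exist when the
   support is finite. *)
definition fsupp :: "('x,'a::zero) vec \<Rightarrow> bool" where
  "fsupp u \<longleftrightarrow> finite {i. u i \<noteq> 0}"

lemma vkeys_iff: "(s, i) \<in> vkeys u \<longleftrightarrow> s \<in> Poly_Mapping.keys (u i)"
  by (simp add: vkeys_def)

lemma finite_vkeys:
  assumes "fsupp u" shows "finite (vkeys u)"
proof -
  have "vkeys u = (\<Union>i\<in>{i. u i \<noteq> 0}. (\<lambda>s. (s, i)) ` Poly_Mapping.keys (u i))"
    by (auto simp: vkeys_def) (metis empty_iff image_eqI keys_zero)
  then show ?thesis using assms by (simp add: fsupp_def)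
qed

lemma fsupp_vsmul: "fsupp u \<Longrightarrow> fsupp (vsmul p (u :: ('x,'a::semiring_0) vec))"
  unfolding fsupp_def vsmul_def by (rule finite_subset[rotated]) auto

lemma fsupp_diff: "fsupp u \<Longrightarrow> fsupp v \<Longrightarrow> fsupp (u - (v :: ('x,'a::ab_group_add) vec))"
  unfolding fsupp_def by (rule finite_subset[of _ "{i. u i \<noteq> 0} \<union> {i. v i \<noteq> 0}"]) auto

lemma fsupp_unitv: "fsupp (unitv i :: ('x,'a::zero_neq_one) vec)"
  unfolding fsupp_def unitv_def by (rule finite_subset[of _ "{i}"]) auto

lemma vkeys_diff: "vkeys (u - v) \<subseteq> vkeys u \<union> vkeys (v :: ('x,'a::ab_group_add) vec)"
  using keys_diff unfolding vkeys_def by fastforce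

lemma vkeys_vsmul_mono:
  "vkeys (vsmul (mono t) u) = (\<lambda>(s, i). (t + s, i)) ` vkeys (u :: ('x,'a::semiring_1) vec)"
  by (auto simp: vkeys_def vsmul_def keys_mono_mult)

lemma vkeys_vsmul_const:
  "vkeys (vsmul (Poly_Mapping.single 0 c) u) \<subseteq> vkeys (u :: ('x,'a::semiring_0) vec)"
  using keys_single_mult[of 0 c] unfolding vkeys_def vsmul_def by fastforce

lemma lppM_SomeD:
  assumes "mod_term_order ord" "fsupp u" "lppM ord u = Some x"
  shows "x \<in> vkeys u" "\<forall>y\<in>vkeys u. y \<noteq> x \<longrightarrow> ord y x"
  using lterm_SomeD[OF mod_order_strict_linear[OF assms(1)] finite_vkeys[OF assms(2)]] assms(3)
  unfolding lppM_def by blast+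

lemma lppM_vsmul_mono:
  fixes u :: "('x,'a::semiring_1) vec"
  assumes "mod_term_order ord" "fsupp u"
  shows "lppM ord (vsmul (mono t) u) = map_option (\<lambda>(s, i). (t + s, i)) (lppM ord u)"
  unfolding lppM_def vkeys_vsmul_mono
  by (rule lterm_image[OF mod_order_strict_linear[OF assms(1)] finite_vkeys[OF assms(2)]])
    (auto intro: mod_order_add_left[OF assms(1)])

lemma lppM_diff_below:
  fixes u v :: "('x,'a::ab_group_add) vec"
  assumes ord: "mod_term_order ord" and u: "fsupp u" "lppM ord u = Some x"
    and v: "\<forall>y\<in>vkeys v. ord y x"
  shows "lppM ord (u - v) = Some x"
proof -
  have sl: "strict_linear ord" by (rule mod_order_strict_linear[OF ord])
  note max = lppM_SomeD[OF ord u]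
  obtain s i where x: "x = (s, i)" by (cases x)
  have "x \<notin> vkeys v" using v strict_linear_irrefl[OF sl] by blast
  then have "x \<in> vkeys (u - v)"
    using max(1) by (simp add: x vkeys_iff in_keys_iff lookup_minus)
  moreover have "\<forall>y\<in>vkeys (u - v). y \<noteq> x \<longrightarrow> ord y x"
    using max(2) v vkeys_diff[of u v] by blast
  ultimately show ?thesis unfolding lppM_def by (rule lterm_eqI[OF sl])
qed

definition fin_labels :: "('x,'a::zero) labpoly list \<Rightarrow> bool" where
  "fin_labels G \<longleftrightarrow> (\<forall>g\<in>set G. fsupp (fst g))"

lemma red_rtrancl_fsupp:
  fixes G :: "('x,'a::field) labpoly list"
  assumes G: "fin_labels G" and red: "(red1 ordR ordM G)\<^sup>*\<^sup>* p q" and p: "fsupp (fst p)"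
  shows "fsupp (fst q)"
  using red p
proof (induction rule: rtranclp_induct)
  case (step q r)
  then obtain v g t c where vg: "(v, g) \<in> set G"
    and r: "fst r = fst q - vsmul (Poly_Mapping.single t c) v"
    unfolding red1_def Let_def by auto
  have "fsupp v" using G vg unfolding fin_labels_def by fastforce
  then show ?case unfolding r using step.IH[OF p] by (intro fsupp_diff fsupp_vsmul)
qed

lemma fsupp_spoly:
  fixes G :: "('x,'a::field) labpoly list"
  assumes "fin_labels G" "k < length G" "l < length G"
  shows "fsupp (fst (spoly ordR G k l))"
  using assms unfolding fin_labels_def spoly_def Let_def lmul_def
  by (auto intro!: fsupp_diff fsupp_vsmul)

lemma length_G_after:
  "length (G_after F m G wh) = length G + (if snd wh \<noteq> 0 then m else 0) + 1"
  unfolding G_after_def new_syz_def by simp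

lemma G_after_last: "G_after F m G wh ! (length (G_after F m G wh) - 1) = wh"
  unfolding G_after_def by (simp add: nth_append)

lemma G_after_nth: "k < length G \<Longrightarrow> G_after F m G wh ! k = G ! k"
  unfolding G_after_def by (simp add: nth_append)

lemma fin_labels_G_after:
  fixes F :: "nat \<Rightarrow> ('x,'a::field) poly"
  assumes "fin_labels G" "fsupp (fst wh)"
  shows "fin_labels (G_after F m G wh)"
  using assms unfolding fin_labels_def G_after_def new_syz_def
  by (auto intro!: fsupp_diff fsupp_vsmul fsupp_unitv)

definition gbgc_inv :: "('x,'a::zero) labpoly list \<Rightarrow> (nat \<times> nat) set \<Rightarrow> bool" where
  "gbgc_inv G CP \<longleftrightarrow> fin_labels G \<and> (\<forall>(k, l)\<in>CP. k < length G \<and> l < length G)"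

lemma gbgc_step_cases:
  assumes "gbgc_step ordR ordM F m (G, CP) (G', CP')"
  obtains p where "p \<in> CP" "G' = G" "CP' = CP - {p}"
  | p k l wh where "p \<in> CP" "(k, l) \<in> {p, prod.swap p}"
      "reduces ordR ordM G (spoly ordR G k l) wh" "G' = G_after F m G wh"
      "CP' \<subseteq> (CP - {p}) \<union> {(length G + m, j) | j. snd wh \<noteq> 0 \<and> j < length G}"
proof -
  let ?fresh = "\<lambda>p. \<exists>(k, l)\<in>{p, prod.swap p}. regular_cp ordR ordM G k l \<and> \<not> cp_genrew ordR ordM G k l"
  obtain p where p: "p \<in> CP" and processed: "?fresh p \<Longrightarrow> \<exists>k l wh. (k, l) \<in> {p, prod.swap p} \<and>
      reduces ordR ordM G (spoly ordR G k l) wh \<and>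
      (G', CP') = (G_after F m G wh, if snd wh \<noteq> 0
         then (CP - {p}) \<union> {(length G + m, j) | j. j < length G \<and> snd (G ! j) \<noteq> 0} else CP - {p})"
    and skipped: "\<not> ?fresh p \<Longrightarrow> (G', CP') = (G, CP - {p})"
    using assms unfolding gbgc_step_def prod.case by (metis (lifting))
  show thesis
  proof (cases "?fresh p")
    case True
    then obtain k l wh where "(k, l) \<in> {p, prod.swap p}" "reduces ordR ordM G (spoly ordR G k l) wh"
      and st: "(G', CP') = (G_after F m G wh, if snd wh \<noteq> 0
         then (CP - {p}) \<union> {(length G + m, j) | j. j < length G \<and> snd (G ! j) \<noteq> 0} else CP - {p})"
      using processed[OF True] by blast
    moreover from st have "CP' \<subseteq> (CP - {p}) \<union> {(length G + m, j) | j. snd wh \<noteq> 0 \<and> j < length G}"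
      by (auto split: if_splits)
    ultimately show thesis using that(2)[OF p] st by blast
  next
    case False
    then show thesis using that(1)[OF p] skipped by blast
  qed
qed

lemma gbgc_inv_init: "gbgc_inv (fst (gbgc_init F m ps)) (snd (gbgc_init F m ps))"
  unfolding gbgc_inv_def fin_labels_def gbgc_init_def
  by (auto intro!: fsupp_diff fsupp_vsmul fsupp_unitv)

lemma gbgc_inv_step:
  fixes F :: "nat \<Rightarrow> ('x,'a::field) poly"
  assumes step: "gbgc_step ordR ordM F m (G, CP) (G', CP')" and inv: "gbgc_inv G CP"
  shows "gbgc_inv G' CP'"
  using step
proof (cases rule: gbgc_step_cases)
  case (1 p)
  then show ?thesis using inv unfolding gbgc_inv_def by auto
next
  case (2 p k l wh)
  have G: "fin_labels G" and CP: "\<forall>(k, l)\<in>CP. k < length G \<and> l < length G"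
    using inv unfolding gbgc_inv_def by auto
  have "k < length G" "l < length G" using 2(1,2) CP by auto
  then have "fsupp (fst wh)"
    using 2(3) red_rtrancl_fsupp[OF G] fsupp_spoly[OF G] unfolding reduces_def by blast
  then have "fin_labels G'" unfolding 2(4) by (rule fin_labels_G_after[OF G])
  moreover have "\<forall>(k, l)\<in>CP'. k < length G' \<and> l < length G'"
    using 2(4,5) CP by (fastforce simp: length_G_after)
  ultimately show ?thesis unfolding gbgc_inv_def by blast
qed

lemma gbgc_inv_reachable:
  fixes F :: "nat \<Rightarrow> ('x,'a::field) poly"
  assumes "(gbgc_step ordR ordM F m)\<^sup>*\<^sup>* (gbgc_init F m ps) (G, CP)"
  shows "gbgc_inv G CP"
  using assms
proof (induction "(G, CP)" arbitrary: G CP rule: rtranclp_induct)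
  case base then show ?case using gbgc_inv_init[of F m ps] by simp
next
  case (step st)
  then show ?case by (cases st) (blast intro: gbgc_inv_step)
qed

context
  fixes ordR :: "'x pp \<Rightarrow> 'x pp \<Rightarrow> bool" and ordM :: "'x mterm \<Rightarrow> 'x mterm \<Rightarrow> bool"
  assumes ordR: "pp_term_order ordR" and ordM: "mod_term_order ordM"
begin

lemma red1_lpp:
  fixes G :: "('x,'a::field) labpoly list"
  assumes "red1 ordR ordM G p q"
  shows "opt_less ordR (lppR ordR (snd q)) (lppR ordR (snd p))"
    and "lppM ordM (fst q) = lppM ordM (fst p)"
proof -
  obtain g t where vg: "g \<noteq> 0" "snd p \<noteq> 0"
    "the (lppR ordR (snd p)) = the (lppR ordR g) + t"
    and q: "snd q = snd p - Poly_Mapping.single t (lcR ordR (snd p) / lcR ordR g) * g"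
    and sig: "lppM ordM (fst q) = lppM ordM (fst p)"
    using assms unfolding red1_def Let_def by auto
  obtain x y where x: "lppR ordR (snd p) = Some x" and y: "lppR ordR g = Some y"
    using vg(1,2) lppR_eq_None[of ordR] by (metis option.exhaust)
  have "Poly_Mapping.lookup g y \<noteq> 0" using lppR_SomeD(1)[OF ordR y] by (simp add: in_keys_iff)
  then have "Poly_Mapping.lookup (snd p) x
      = lcR ordR (snd p) / lcR ordR g * Poly_Mapping.lookup g y"
    by (simp add: lcR_eq[OF x] lcR_eq[OF y])
  from lppR_cancel[OF ordR x y _ this] vg(3) x y
  show "opt_less ordR (lppR ordR (snd q)) (lppR ordR (snd p))"
    by (simp add: q x add.commute)
  show "lppM ordM (fst q) = lppM ordM (fst p)" by (rule sig)
qed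

lemma red_rtrancl_lppM:
  fixes G :: "('x,'a::field) labpoly list"
  shows "(red1 ordR ordM G)\<^sup>*\<^sup>* p q \<Longrightarrow> lppM ordM (fst q) = lppM ordM (fst p)"
  by (induction rule: rtranclp_induct) (simp_all add: red1_lpp(2))

lemma red_rtrancl_below:
  fixes G :: "('x,'a::field) labpoly list"
  assumes "(red1 ordR ordM G)\<^sup>*\<^sup>* p q" "opt_less ordR (lppR ordR (snd p)) b"
  shows "opt_less ordR (lppR ordR (snd q)) b"
  using assms
  by (induction rule: rtranclp_induct)
    (auto intro: opt_less_trans[OF pp_order_strict_linear[OF ordR]] red1_lpp(1))

lemma reduces_lppR_decreases:
  fixes G :: "('x,'a::field) labpoly list"
  assumes "reducible ordR ordM G p" "reduces ordR ordM G p q"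
  shows "opt_less ordR (lppR ordR (snd q)) (lppR ordR (snd p))"
proof -
  have pq: "(red1 ordR ordM G)\<^sup>*\<^sup>* p q" and "\<not> reducible ordR ordM G q"
    using assms(2) unfolding reduces_def by blast+
  then have "p \<noteq> q" using assms(1) by blast
  with pq obtain p' where "red1 ordR ordM G p p'" "(red1 ordR ordM G)\<^sup>*\<^sup>* p' q"
    by (metis converse_rtranclpE)
  then show ?thesis using red1_lpp(1) red_rtrancl_below by blast
qed

lemma spoly_leading_terms:
  fixes G :: "('x,'a::field) labpoly list"
  assumes G: "fin_labels G" and kl: "k < length G" "l < length G"
    and reg: "regular_cp ordR ordM G k l"
  obtains s i a where "lppM ordM (fst (G ! k)) = Some (s, i)" "lppR ordR (snd (G ! k)) = Some a"
    "lppM ordM (fst (spoly ordR G k l)) = Some (tmul ordR G k l + s, i)"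
    "opt_less ordR (lppR ordR (snd (spoly ordR G k l))) (Some (tmul ordR G k l + a))"
proof -
  define u where "u = fst (G ! k)"
  define f where "f = snd (G ! k)"
  define v where "v = fst (G ! l)"
  define g where "g = snd (G ! l)"
  define tf where "tf = tmul ordR G k l"
  define tg where "tg = tmul ordR G l k"
  define c where "c = lcR ordR f / lcR ordR g"
  have fin: "fsupp u" "fsupp v" using G kl unfolding fin_labels_def u_def v_def by simp_all
  have "f \<noteq> 0" "g \<noteq> 0"
    and regl: "opt_less ordM (lppM ordM (vsmul (mono tg) v)) (lppM ordM (vsmul (mono tf) u))"
    using reg unfolding regular_cp_def lmul_def u_def f_def v_def g_def tf_def tg_def by auto
  then obtain a b where a: "lppR ordR f = Some a" and b: "lppR ordR g = Some b"
    using lppR_eq_None[of ordR] by (metis option.exhaust)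
  obtain s i where s: "lppM ordM u = Some (s, i)"
    using regl lppM_vsmul_mono[OF ordM fin(1)]
    by (cases "lppM ordM u") (auto simp: opt_less_def)
  have sig_tf: "lppM ordM (vsmul (mono tf) u) = Some (tf + s, i)"
    by (simp add: lppM_vsmul_mono[OF ordM fin(1)] s)
  have spoly: "spoly ordR G k l = (vsmul (mono tf) u - vsmul (Poly_Mapping.single 0 c) (vsmul (mono tg) v),
      mono tf * f - Poly_Mapping.single tg c * g)"
    unfolding spoly_def Let_def lmul_def u_def f_def v_def g_def tf_def tg_def c_def
    by (simp add: mono_def mult.assoc[symmetric] mult_single)
  (* the signature of the S-polynomial is that of its first component, \<dots> *)
  have "\<forall>y\<in>vkeys (vsmul (mono tg) v). ordM y (tf + s, i)"
    using regl sig_tf lterm_below[OF mod_order_strict_linear[OF ordM] finite_vkeys]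
      fsupp_vsmul[OF fin(2)] unfolding lppM_def by metis
  then have "lppM ordM (fst (spoly ordR G k l)) = Some (tf + s, i)"
    unfolding spoly fst_conv using vkeys_vsmul_const
    by (intro lppM_diff_below[OF ordM fsupp_vsmul[OF fin(1)] sig_tf]) blast
  (* \<dots> while the leading monomials of its polynomial parts cancel *)
  moreover have "opt_less ordR (lppR ordR (snd (spoly ordR G k l))) (Some (tf + a))"
  proof -
    have lcm: "tf + a = tg + b"
      using a b pp_lcm_cofactors unfolding tf_def tg_def tmul_def Let_def u_def f_def v_def g_def by simp
    have "Poly_Mapping.lookup g b \<noteq> 0" using lppR_SomeD(1)[OF ordR b] by (simp add: in_keys_iff)
    then have "Poly_Mapping.lookup (mono tf * f) (tf + a) = c * Poly_Mapping.lookup g b"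
      using lookup_single_mult[of tf 1 f a] by (simp add: mono_def c_def lcR_eq[OF a] lcR_eq[OF b])
    from lppR_cancel[OF ordR lppR_mono_mult[OF ordR a] b lcm this]
    show ?thesis unfolding spoly by simp
  qed
  ultimately show thesis using that s a unfolding u_def f_def v_def g_def tf_def tg_def by blast
qed

lemma admissible_new_element:
  fixes G :: "('x,'a::field) labpoly list"
  assumes G: "fin_labels G" and kl: "k < length G" "l < length G"
    and reg: "regular_cp ordR ordM G k l"
    and red: "reduces ordR ordM G (spoly ordR G k l) wh"
  shows "gless ordR ordM (G_after F m G wh) (length (G_after F m G wh) - 1) k"
proof -
  define tf where "tf = tmul ordR G k l"
  obtain s i a where s: "lppM ordM (fst (G ! k)) = Some (s, i)"
    and a: "lppR ordR (snd (G ! k)) = Some a"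
    and sp: "lppM ordM (fst (spoly ordR G k l)) = Some (tf + s, i)"
      "opt_less ordR (lppR ordR (snd (spoly ordR G k l))) (Some (tf + a))"
    using spoly_leading_terms[OF G kl reg] unfolding tf_def by blast
  have steps: "(red1 ordR ordM G)\<^sup>*\<^sup>* (spoly ordR G k l) wh"
    using red unfolding reduces_def by blast
  have "lppM ordM (fst wh) = Some (tf + s, i)"
    using red_rtrancl_lppM[OF steps] sp(1) by simp
  moreover have "opt_less ordR (lppR ordR (snd wh)) (lppR ordR (mono tf * snd (G ! k)))"
    using red_rtrancl_below[OF steps sp(2)] lppR_mono_mult[OF ordR a] by simp
  moreover have "(mono 0 :: ('x,'a) poly) = 1" by (simp add: mono_def)
  ultimately show ?thesis
    unfolding gless_def G_after_last G_after_nth[OF kl(1)]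
    using s pp_lcm_multiple[of s tf] by (simp add: Let_def)
qed

lemma super_top_reducible_genrew:
  fixes G :: "('x,'a::field) labpoly list"
  assumes fin: "fsupp (fst (G ! k))" and f: "snd (G ! k) \<noteq> 0"
    and rd: "reducible ordR ordM G (lmul t (G ! k))"
    and red: "reduces ordR ordM G (lmul t (G ! k)) wh"
    and k': "k' < length G"
    and u': "lppM ordM (fst (G ! k')) = Some (s', i)" and f': "lppR ordR (snd (G ! k')) = Some b"
    and w: "lppM ordM (fst wh) = Some (s' + r, i)" and h: "lppR ordR (snd wh) = Some (b + r)"
  shows "genrew ordR ordM G t k"
proof -
  have steps: "(red1 ordR ordM G)\<^sup>*\<^sup>* (lmul t (G ! k)) wh"
    using red unfolding reduces_def by blast
  have sig_t: "lppM ordM (vsmul (mono t) (fst (G ! k))) = Some (s' + r, i)"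
    using red_rtrancl_lppM[OF steps] w by (simp add: lmul_def)
  then obtain s where s: "lppM ordM (fst (G ! k)) = Some (s, i)" and ts: "t + s = s' + r"
    by (auto simp: lppM_vsmul_mono[OF ordM fin])
  obtain a where a: "lppR ordR (snd (G ! k)) = Some a"
    using f lppR_eq_None[of ordR] by (metis option.exhaust)
  have lower: "ordR (b + r) (t + a)"
    using reduces_lppR_decreases[OF rd red] h lppR_mono_mult[OF ordR a, of t]
    by (simp add: lmul_def opt_less_def)
  (* cancel the factor q shared by the two cofactors beyond the lcm L of the signatures *)
  define L where "L = pp_lcm s s'"
  obtain q where t: "t = (L - s) + q" and r: "r = (L - s') + q"
    using pp_common_multiple_decomp[OF ts] unfolding L_def by blast
  have "ordR ((L - s' + b) + q) ((L - s + a) + q)"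
    using lower unfolding t r by (simp add: ac_simps)
  then have "ordR (L - s' + b) (L - s + a)" by (rule pp_order_cancel[OF ordR])
  then have "gless ordR ordM G k' k"
    unfolding gless_def using u' s lppR_mono_mult[OF ordR f'] lppR_mono_mult[OF ordR a]
    unfolding L_def by (simp add: Let_def opt_less_def)
  moreover have "mdvd (lppM ordM (fst (G ! k'))) (lppM ordM (fst (lmul t (G ! k))))"
    using u' sig_t by (simp add: lmul_def mdvd_def pp_dvd_def)
  ultimately show ?thesis unfolding genrew_def using k' by blast
qed

end

theorem mainTheorem5:
  fixes ordR :: "('x::finite) pp \<Rightarrow> 'x pp \<Rightarrow> bool"
    and ordM :: "'x mterm \<Rightarrow> 'x mterm \<Rightarrow> bool"
    and F :: "nat \<Rightarrow> ('x, 'a::field) poly"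
    and m :: nat
    and ps :: "(nat \<times> nat) list"
  assumes "pp_term_order ordR"
    and "mod_term_order ordM"
    and "distinct ps" and "set ps = {(i, j). i < j \<and> j < m}"
    and "(gbgc_step ordR ordM F m)\<^sup>*\<^sup>* (gbgc_init F m ps) (G, CP)"
  shows
    "(\<forall>p\<in>CP. \<forall>k l wh. (k, l) \<in> {p, prod.swap p} \<and> regular_cp ordR ordM G k l \<and>
        \<not> cp_genrew ordR ordM G k l \<and> reduces ordR ordM G (spoly ordR G k l) wh \<longrightarrow>
        gless ordR ordM (G_after F m G wh) (length (G_after F m G wh) - 1) k)
     \<and>
     (\<forall>k t wh. k < length G \<and> snd (G ! k) \<noteq> 0 \<and>
        reducible ordR ordM G (lmul t (G ! k)) \<and> reduces ordR ordM G (lmul t (G ! k)) wh \<and>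
        (\<exists>k' < length G. \<exists>s.
           lppM ordM (fst (G ! k')) \<noteq> None \<and> lppR ordR (snd (G ! k')) \<noteq> None \<and>
           lppM ordM (fst wh) = Some (fst (the (lppM ordM (fst (G ! k')))) + s,
                                      snd (the (lppM ordM (fst (G ! k'))))) \<and>
           lppR ordR (snd wh) = Some (the (lppR ordR (snd (G ! k'))) + s) \<and>
           lcM ordM (fst wh) / lcM ordM (fst (G ! k')) = lcR ordR (snd wh) / lcR ordR (snd (G ! k'))) \<longrightarrow>
        genrew ordR ordM G t k)"
proof -
  have G: "fin_labels G" and CP: "\<forall>(k, l)\<in>CP. k < length G \<and> l < length G"
    using gbgc_inv_reachable[OF assms(5)] unfolding gbgc_inv_def by auto
  have admissible: "gless ordR ordM (G_after F m G wh) (length (G_after F m G wh) - 1) k"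
    if "p \<in> CP" "(k, l) \<in> {p, prod.swap p}" "regular_cp ordR ordM G k l"
      "reduces ordR ordM G (spoly ordR G k l) wh" for p k l wh
    using that CP admissible_new_element[OF assms(1,2) G _ _ that(3,4)] by auto
  have rewritable: "genrew ordR ordM G t k"
    if hyps: "k < length G" "snd (G ! k) \<noteq> 0" "reducible ordR ordM G (lmul t (G ! k))"
      "reduces ordR ordM G (lmul t (G ! k)) wh" "k' < length G"
      "lppM ordM (fst (G ! k')) \<noteq> None" "lppR ordR (snd (G ! k')) \<noteq> None"
      "lppM ordM (fst wh) = Some (fst (the (lppM ordM (fst (G ! k')))) + r,
                                  snd (the (lppM ordM (fst (G ! k')))))"
      "lppR ordR (snd wh) = Some (the (lppR ordR (snd (G ! k'))) + r)" for k t wh k' r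
  proof -
    obtain s' i b where "lppM ordM (fst (G ! k')) = Some (s', i)" "lppR ordR (snd (G ! k')) = Some b"
      using hyps(6,7) by auto
    then show ?thesis
      using super_top_reducible_genrew[OF assms(1,2) _ hyps(2-5)] hyps(1,8,9) G
      by (simp add: fin_labels_def)
  qed
  show ?thesis using admissible rewritable by blast
qed

end
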